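(* Let $\omega\ge1$, $n\ge1$, and $0\le A_i,B_i<2^\omega$ for $0\le i\le n-1$. Let $c_0=0$ and $c_{i+1}=\lfloor (A_i+B_i+c_i)/2^\omega\rfloor$. Suppose $\mathsf t_i,\mathsf p_i\in\{0,\dots,255\}$ are such that for each $i$ the case of $(\mathsf t_i,\mathsf p_i)$ with respect to base $256$ equals the case of $(A_i,B_i)$ with respect to base $2^\omega$. Let $\mathsf s_0,\dots,\mathsf s_{n-1}\in\{0,\dots,255\}$ be defined by $\sum_{i=0}^{n-1}256^i\mathsf s_i=\big(\sum_{i=0}^{n-1}256^i\mathsf t_i+\sum_{i=0}^{n-1}256^i\mathsf p_i\big)\bmod 256^n$. Then for every $0\le i\le n-1$, $(\mathsf s_i-\mathsf t_i-\mathsf p_i)\bmod 256=c_i$.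
   Context: For a base $b\ge2$ and integers $0\le x,y<b$, the case of $(x,y)$ with respect to base $b$ is $\mathbf N$ if $x+y\le b-2$, $\mathbf P$ if $x+y=b-1$, and $\mathbf G$ if $x+y\ge b$. *)

theory Defs
  imports Main
begin

datatype digit_case = CaseN | CaseP | CaseG

text \<open>Case of (x,y) w.r.t. base b (intended for 0 <= x,y < b, b >= 2).\<close>
definition case_of :: "nat \<Rightarrow> nat \<Rightarrow> nat \<Rightarrow> digit_case" where
  "case_of b x y = (if x + y + 2 \<le> b then CaseN
                    else if x + y + 1 = b then CaseP
                    else CaseG)"

end

theory Submission
  imports Defs
begin

text \<open>Adding two base-\<open>b\<close> digits together with an incoming carry \<open>\<le> 1\<close> produces an outgoing
  carry that depends only on the case of the two digits: none in case \<open>N\<close>, a forwarded one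
  in case \<open>P\<close>, a fresh one in case \<open>G\<close>. Hence two additions whose digit pairs have the same
  cases position by position, in the bases \<open>256\<close> and \<open>2^\<omega>\<close>, have the same carries. In the
  byte addition \<open>s = t + p mod 256^n\<close> every byte is \<open>s\<^sub>i = (t\<^sub>i + p\<^sub>i + c\<^sub>i) mod 256\<close>, so
  \<open>s\<^sub>i - t\<^sub>i - p\<^sub>i \<equiv> c\<^sub>i (mod 256)\<close>, and \<open>c\<^sub>i \<le> 1\<close> is its own residue.\<close>

fun carry :: "nat \<Rightarrow> (nat \<Rightarrow> nat) \<Rightarrow> (nat \<Rightarrow> nat) \<Rightarrow> nat \<Rightarrow> nat" where
  "carry b x y 0 = 0"
| "carry b x y (Suc i) = (x i + y i + carry b x y i) div b"

definition case_carry :: "digit_case \<Rightarrow> nat \<Rightarrow> nat" where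
  "case_carry k cin = (case k of CaseN \<Rightarrow> 0 | CaseP \<Rightarrow> cin | CaseG \<Rightarrow> 1)"

lemma carry_le_one:
  assumes "\<forall>k<i. x k < b \<and> y k < b"
  shows "carry b x y i \<le> 1"
  using assms
proof (induction i)
  case (Suc i)
  then have "x i + y i + carry b x y i < 2 * b" by auto
  then have "(x i + y i + carry b x y i) div b < 2" by (rule less_mult_imp_div_less)
  then show ?case by simp
qed simp

lemma carry_unique:
  assumes "c 0 = 0" and "\<forall>k<n. c (Suc k) = (x k + y k + c k) div b" and "i \<le> n"
  shows "c i = carry b x y i"
  using assms(3) by (induction i) (simp_all add: assms(1,2))

lemma div_eq_case_carry:
  assumes "x < b" and "y < b" and "cin \<le> 1"
  shows "(x + y + cin) div b = case_carry (case_of b x y) cin"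
proof -
  have "x + y + cin < b * 2" using assms by linarith
  then show ?thesis
    using assms by (auto simp: case_carry_def case_of_def div_nat_eqI)
qed

lemma carry_eq_if_case_of_eq:
  assumes "\<forall>k<i. x k < b \<and> y k < b" and "\<forall>k<i. x' k < b' \<and> y' k < b'"
    and "\<forall>k<i. case_of b (x k) (y k) = case_of b' (x' k) (y' k)"
  shows "carry b x y i = carry b' x' y' i"
  using assms
proof (induction i)
  case (Suc i)
  then have "carry b x y i = carry b' x' y' i" by simp
  moreover have "carry b x y i \<le> 1"
    using Suc.prems(1) by (intro carry_le_one) simp
  ultimately show ?case
    using Suc.prems by (simp add: div_eq_case_carry)
qed simp

lemma digit_sum_add:
  "(\<Sum>i<m. b ^ i * x i) + (\<Sum>i<m. b ^ i * y i) =
   (\<Sum>i<m. b ^ i * ((x i + y i + carry b x y i) mod b)) + b ^ m * carry b x y m"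
proof (induction m)
  case (Suc m)
  let ?r = "x m + y m + carry b x y m"
  have "b ^ m * carry b x y m + b ^ m * (x m + y m) = b ^ m * ?r"
    by (simp add: algebra_simps)
  also have "\<dots> = b ^ m * (?r mod b + b * (?r div b))"
    by (simp only: mod_mult_div_eq)
  also have "\<dots> = b ^ m * (?r mod b) + b ^ Suc m * (?r div b)"
    by (simp only: distrib_left power_Suc2 mult.assoc)
  finally show ?case
    using Suc.IH by (simp add: algebra_simps)
qed simp

lemma digit_sum_less_power:
  fixes b :: nat
  assumes "\<forall>i<n. x i < b"
  shows "(\<Sum>i<n. b ^ i * x i) < b ^ n"
  using assms
proof (induction n)
  case (Suc n)
  then have "(\<Sum>i<n. b ^ i * x i) + b ^ n * x n < b ^ n + b ^ n * (b - 1)"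
    by (intro add_less_le_mono) auto
  also have "\<dots> = b ^ Suc n"
    using Suc.prems by (cases b) (auto simp: algebra_simps)
  finally show ?case by simp
qed simp

lemma digit_sum_eq_imp_eq:
  fixes b :: nat
  assumes "\<forall>i<n. x i < b" and "\<forall>i<n. y i < b"
    and "(\<Sum>i<n. b ^ i * x i) = (\<Sum>i<n. b ^ i * y i)"
  shows "\<forall>i<n. x i = y i"
  using assms
proof (induction n)
  case (Suc n)
  let ?X = "\<Sum>i<n. b ^ i * x i" and ?Y = "\<Sum>i<n. b ^ i * y i"
  have eq: "?X + b ^ n * x n = ?Y + b ^ n * y n"
    using Suc.prems(3) by simp
  have "?X = (?X + b ^ n * x n) mod b ^ n"
    using digit_sum_less_power[of n x b] Suc.prems(1) by simp
  also have "\<dots> = (?Y + b ^ n * y n) mod b ^ n"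
    by (simp only: eq)
  also have "\<dots> = ?Y"
    using digit_sum_less_power[of n y b] Suc.prems(2) by simp
  finally have "?X = ?Y" .
  moreover have "b > 0"
    using Suc.prems(1) by auto
  ultimately have "x n = y n"
    using eq by simp
  moreover have "\<forall>i<n. x i = y i"
    using Suc.IH Suc.prems(1,2) \<open>?X = ?Y\<close> by simp
  ultimately show ?case
    using less_Suc_eq by auto
qed simp

lemma residue_of_digit_difference:
  assumes "s = (a + c) mod b" and "c < b"
  shows "(int s - int a) mod int b = int c"
proof -
  have "(int s - int a) mod int b = ((int a + int c) mod int b - int a) mod int b"
    using assms(1) by (simp add: zmod_int)
  also have "\<dots> = int c mod int b"
    by (simp add: mod_diff_left_eq)
  finally show ?thesis
    using assms(2) by simp
qed

theorem lemma2:
  fixes \<omega> n :: nat and A B c t p s :: "nat \<Rightarrow> nat"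
  assumes "\<omega> \<ge> 1" and "n \<ge> 1"
    and "\<forall>i<n. A i < 2 ^ \<omega> \<and> B i < 2 ^ \<omega>"
    and "c 0 = 0"
    and "\<forall>i<n. c (Suc i) = (A i + B i + c i) div 2 ^ \<omega>"
    and "\<forall>i<n. t i < 256 \<and> p i < 256"
    and "\<forall>i<n. case_of 256 (t i) (p i) = case_of (2 ^ \<omega>) (A i) (B i)"
    and "\<forall>i<n. s i < 256"
    and "(\<Sum>i<n. 256 ^ i * s i) =
         ((\<Sum>i<n. 256 ^ i * t i) + (\<Sum>i<n. 256 ^ i * p i)) mod 256 ^ n"
  shows "\<forall>i<n. (int (s i) - int (t i) - int (p i)) mod 256 = int (c i)"
proof (intro allI impI)
  fix i assume "i < n"
  have "((\<Sum>i<n. 256 ^ i * t i) + (\<Sum>i<n. 256 ^ i * p i)) mod 256 ^ n =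
        (\<Sum>i<n. 256 ^ i * ((t i + p i + carry 256 t p i) mod 256))"
    unfolding digit_sum_add by (simp add: digit_sum_less_power)
  with assms(9) have "(\<Sum>i<n. 256 ^ i * s i) =
      (\<Sum>i<n. 256 ^ i * ((t i + p i + carry 256 t p i) mod 256))"
    by (rule trans)
  with assms(8) have "\<forall>i<n. s i = (t i + p i + carry 256 t p i) mod 256"
    by (intro digit_sum_eq_imp_eq) simp_all
  moreover have "carry 256 t p i = carry (2 ^ \<omega>) A B i"
    using assms(3,6,7) \<open>i < n\<close> by (intro carry_eq_if_case_of_eq) simp_all
  moreover have "carry (2 ^ \<omega>) A B i = c i"
    using carry_unique[OF assms(4,5)] \<open>i < n\<close> by simp
  moreover have "c i \<le> 1"
    using assms(3) \<open>i < n\<close> \<open>carry (2 ^ \<omega>) A B i = c i\<close> carry_le_one[of i A "2 ^ \<omega>" B] by simp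
  ultimately have "(int (s i) - int (t i + p i)) mod int 256 = int (c i)"
    using \<open>i < n\<close> by (intro residue_of_digit_difference) simp_all
  then show "(int (s i) - int (t i) - int (p i)) mod 256 = int (c i)"
    by (simp add: algebra_simps)
qed

end
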